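(* Let $1\leq\alpha\leq2$ and let $f(z)=z+\sum_{n=2}^{\infty}a_{n}z^{n}$ be analytic in the open unit disc $\mathbb{U}=\{z\in\mathbb{C}:|z|<1\}$ and satisfy \[ \operatorname{Re}\left\{\frac{zf'(z)}{f(z)}\right\}>\frac{\alpha}{2}-1\qquad (z\in\mathbb{U}). \] Then \[ \left|a_{2}a_{4}-a_{3}^{2}\right|\leq\frac{(2-\frac{\alpha}{2})^{2}}{3}\left[4\left((2-\tfrac{\alpha}{2})^{2}-1\right)+3\right]. \]
   Context: The class of such $f$ is denoted $S_{\alpha}^{\ast}$ in the paper (starlike functions of order $\frac{\alpha}{2}-1$). The quantity $a_2a_4-a_3^2$ is the second Hankel determinant of $f$. *)

theory Defs
  imports "HOL-Analysis.Analysis"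
begin

definition taylor_coeff :: "(complex \<Rightarrow> complex) \<Rightarrow> nat \<Rightarrow> complex" where
  "taylor_coeff f n = (deriv ^^ n) f 0 / of_nat (fact n)"

end

theory Submission
  imports Defs "HOL-Complex_Analysis.Complex_Analysis"
begin

(*
  Put t = 2 - alpha/2, so that the hypothesis reads Re (z f'/f) > 1 - t. The map
  w -> (w - 1)/(w + 2t - 1) sends this half-plane into the unit disc and 1 to 0, so by
  Schwarz's lemma z f'/f = (1 + (2t - 1) z k)/(1 - z k) with k holomorphic and |k| <= 1.
  Comparing coefficients gives
    a2 a4 - a3^2 = t^2/3 (4 k0 k2 + 2 k0^2 k1 - 3 k1^2 - 3 k0^4 - 4 (t^2 - 1) k0^4).
  One step of the Schur algorithm yields |k1| <= 1 - |k0|^2 and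
  |k2| <= 1 - |k0|^2 - |k1|^2/(1 + |k0|), which reduce the bound 3 for the first four terms
  to a polynomial inequality in |k0| and |k1|; the last term is at most 4 (t^2 - 1).
*)

definition schur_function :: "(complex \<Rightarrow> complex) \<Rightarrow> bool" where
  "schur_function g \<longleftrightarrow> g holomorphic_on ball 0 1 \<and> (\<forall>z\<in>ball 0 1. norm (g z) \<le> 1)"

lemma fps_expansion_nth_0 [simp]: "fps_nth (fps_expansion f 0) n = taylor_coeff f n"
  by (simp add: fps_expansion_def taylor_coeff_def)

lemma taylor_coeff_0 [simp]: "taylor_coeff f 0 = f 0"
  by (simp add: taylor_coeff_def)

lemma fps_mult_nth_2:
  "fps_nth (f * g) 2 = fps_nth f 0 * fps_nth g 2 + fps_nth f 1 * fps_nth g 1 + fps_nth f 2 * fps_nth g 0"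
  by (simp add: fps_mult_nth eval_nat_numeral)

lemma fps_mult_nth_3:
  "fps_nth (f * g) 3
     = fps_nth f 0 * fps_nth g 3 + fps_nth f 1 * fps_nth g 2 + fps_nth f 2 * fps_nth g 1 + fps_nth f 3 * fps_nth g 0"
  by (simp add: fps_mult_nth eval_nat_numeral)

lemma holomorphic_on_ball_has_fps_expansion:
  "f holomorphic_on ball 0 r \<Longrightarrow> r > 0 \<Longrightarrow> f has_fps_expansion fps_expansion f 0"
  by (rule has_fps_expansion_fps_expansion) auto

lemma has_fps_expansion_unique_on_ball:
  fixes f g :: "complex \<Rightarrow> complex"
  assumes "f has_fps_expansion F" "g has_fps_expansion G" "r > 0"
    and "\<And>z. z \<in> ball 0 r \<Longrightarrow> f z = g z"
  shows "F = G"
proof -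
  have "eventually (\<lambda>z. z \<in> ball 0 r) (nhds (0::complex))"
    using \<open>r > 0\<close> by (intro eventually_nhds_in_open) auto
  then have "eventually (\<lambda>z. f z = g z) (nhds 0)"
    by eventually_elim (use assms(4) in simp)
  then have "g has_fps_expansion F"
    using assms(1) has_fps_expansion_cong by blast
  then show ?thesis
    using assms(2) fps_expansion_unique_complex by blast
qed

lemma schur_function_constant_if_norm_1:
  assumes "schur_function g" "z \<in> ball 0 1" "norm (g z) = 1" "w \<in> ball 0 1"
  shows "g w = g z"
proof -
  have "g constant_on ball 0 1"
    using assms by (intro maximum_modulus_principle[where U = "ball 0 1" and \<xi> = z])
      (auto simp: schur_function_def)
  then show ?thesis
    using assms(2,4) by (auto simp: constant_on_def)
qed

lemma schur_function_norm_less_1: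
  assumes "schur_function g" "norm (g 0) < 1" "z \<in> ball 0 1"
  shows "norm (g z) < 1"
proof (rule ccontr)
  assume "\<not> norm (g z) < 1"
  then have "norm (g z) = 1"
    using assms(1,3) by (force simp: schur_function_def)
  then show False
    using schur_function_constant_if_norm_1[OF assms(1,3), of 0] assms(2) by simp
qed

lemma schur_function_taylor_coeff_eq_0:
  assumes "schur_function g" "norm (g 0) = 1" "n > 0"
  shows "taylor_coeff g n = 0"
proof -
  have "g has_fps_expansion fps_expansion g 0"
    using assms(1) holomorphic_on_ball_has_fps_expansion[of g 1] by (simp add: schur_function_def)
  moreover have "(\<lambda>_. g 0) has_fps_expansion fps_const (g 0)"
    by (rule has_fps_expansion_const)
  moreover have "g z = g 0" if "z \<in> ball 0 1" for z
    using schur_function_constant_if_norm_1[OF assms(1) _ assms(2) that] by simp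
  ultimately have "fps_expansion g 0 = fps_const (g 0)"
    by (rule has_fps_expansion_unique_on_ball[OF _ _ zero_less_one])
  then have "taylor_coeff g n = fps_nth (fps_const (g 0)) n"
    by (metis fps_expansion_nth_0)
  then show ?thesis
    using assms(3) by simp
qed

lemma Schwarz_quotient_schur_function:
  assumes holf: "f holomorphic_on ball 0 1" and f0: "f 0 = 0"
    and less: "\<And>z. norm z < 1 \<Longrightarrow> norm (f z) < 1"
  obtains h where "schur_function h" "\<And>z. z \<in> ball 0 1 \<Longrightarrow> f z = z * h z"
proof -
  obtain h where holh: "h holomorphic_on ball 0 1" and fh: "\<And>z. norm z < 1 \<Longrightarrow> f z = z * h z"
    and h0: "deriv f 0 = h 0"
    using Schwarz3[OF holf f0] by blast
  have "norm (h z) \<le> 1" if "z \<in> ball 0 1" for z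
  proof (cases "z = 0")
    case True
    then show ?thesis
      using Schwarz_Lemma(2)[OF holf f0 less, of 0] h0 by simp
  next
    case False
    have "norm z * norm (h z) \<le> norm z * 1"
      using Schwarz_Lemma(1)[OF holf f0 less, of z] fh[of z] that by (simp add: norm_mult)
    then show ?thesis
      using False by simp
  qed
  then show ?thesis
    using that[of h] holh fh by (auto simp: schur_function_def)
qed

lemma norm_diff_less_norm_1_minus_cnj_mult:
  fixes a x :: complex
  assumes "norm a < 1" "norm x < 1"
  shows "norm (x - a) < norm (1 - cnj a * x)"
proof -
  have "complex_of_real ((norm (1 - cnj a * x))\<^sup>2 - (norm (x - a))\<^sup>2)
          = (1 - a * cnj a) * (1 - x * cnj x)"
    by (simp only: of_real_diff complex_norm_square) (simp add: algebra_simps)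
  also have "\<dots> = complex_of_real ((1 - (norm a)\<^sup>2) * (1 - (norm x)\<^sup>2))"
    by (simp only: of_real_mult of_real_diff of_real_1 complex_norm_square)
  finally have "(norm (1 - cnj a * x))\<^sup>2 - (norm (x - a))\<^sup>2 = (1 - (norm a)\<^sup>2) * (1 - (norm x)\<^sup>2)"
    using of_real_eq_iff by blast
  moreover have "(1 - (norm a)\<^sup>2) * (1 - (norm x)\<^sup>2) > 0"
    using assms by (simp add: power_less_one_iff)
  ultimately show ?thesis
    by (simp add: power2_less_imp_less)
qed

lemma schur_algorithm_step:
  assumes g: "schur_function g" and g0: "norm (g 0) < 1"
  obtains h where "schur_function h"
    "\<And>z. z \<in> ball 0 1 \<Longrightarrow> g z - g 0 = z * (1 - cnj (g 0) * g z) * h z"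
proof -
  define a where "a = g 0"
  have less: "norm (g z) < 1" if "z \<in> ball 0 1" for z
    using schur_function_norm_less_1[OF g g0 that] .
  have den: "1 - cnj a * g z \<noteq> 0" if "z \<in> ball 0 1" for z
  proof
    assume "1 - cnj a * g z = 0"
    then have "norm (cnj a) * norm (g z) = 1"
      by (metis eq_iff_diff_eq_0 norm_mult norm_one)
    moreover have "norm (cnj a) * norm (g z) \<le> norm a"
      using less[OF that] by (simp add: mult_left_le)
    ultimately show False
      using g0 by (simp add: a_def)
  qed
  define \<phi> where "\<phi> z = (g z - a) / (1 - cnj a * g z)" for z
  have hol: "\<phi> holomorphic_on ball 0 1"
    unfolding \<phi>_def using g den by (intro holomorphic_intros) (auto simp: schur_function_def)
  have \<phi>0: "\<phi> 0 = 0"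
    by (simp add: \<phi>_def a_def)
  have \<phi>less: "norm (\<phi> z) < 1" if "norm z < 1" for z
    using norm_diff_less_norm_1_minus_cnj_mult[of a "g z"] less[of z] g0 den[of z] that
    by (simp add: \<phi>_def a_def norm_divide divide_less_eq)
  obtain h where h: "schur_function h" and \<phi>h: "\<And>z. z \<in> ball 0 1 \<Longrightarrow> \<phi> z = z * h z"
    using Schwarz_quotient_schur_function[OF hol \<phi>0 \<phi>less] by blast
  show ?thesis
  proof (rule that[OF h])
    fix z :: complex
    assume z: "z \<in> ball 0 1"
    have "g z - a = \<phi> z * (1 - cnj a * g z)"
      using den[OF z] by (simp add: \<phi>_def)
    then show "g z - g 0 = z * (1 - cnj (g 0) * g z) * h z"
      using \<phi>h[OF z] by (simp add: a_def)
  qed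
qed

lemma schur_algorithm_taylor_coeffs:
  assumes g: "schur_function g" and g0: "norm (g 0) < 1"
  obtains h :: "complex \<Rightarrow> complex" where "schur_function h"
    "taylor_coeff g 1 = complex_of_real (1 - (norm (g 0))\<^sup>2) * h 0"
    "taylor_coeff g 2
       = complex_of_real (1 - (norm (g 0))\<^sup>2) * taylor_coeff h 1 - cnj (g 0) * taylor_coeff g 1 * h 0"
proof -
  obtain h where h: "schur_function h"
    and eq: "\<And>z. z \<in> ball 0 1 \<Longrightarrow> g z - g 0 = z * (1 - cnj (g 0) * g z) * h z"
    using schur_algorithm_step[OF g g0] by blast
  define G where "G = fps_expansion g 0"
  define H where "H = fps_expansion h 0"
  have G: "g has_fps_expansion G" and H: "h has_fps_expansion H"
    using g h holomorphic_on_ball_has_fps_expansion[of _ 1]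
    by (simp_all add: G_def H_def schur_function_def)
  have "(\<lambda>z. g z - g 0) has_fps_expansion G - fps_const (g 0)"
    by (intro has_fps_expansion_diff G has_fps_expansion_const)
  moreover have "(\<lambda>z. z * (1 - cnj (g 0) * g z) * h z)
                   has_fps_expansion fps_X * (1 - fps_const (cnj (g 0)) * G) * H"
    by (intro has_fps_expansion_mult has_fps_expansion_fps_X has_fps_expansion_diff
        has_fps_expansion_1 has_fps_expansion_cmult_left G H)
  ultimately have "G - fps_const (g 0) = fps_X * (1 - fps_const (cnj (g 0)) * G) * H"
    by (rule has_fps_expansion_unique_on_ball[OF _ _ zero_less_one eq])
  then have G_eq: "G = fps_const (g 0) + fps_X * ((1 - fps_const (cnj (g 0)) * G) * H)"
    by (metis diff_eq_eq add.commute mult.assoc)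
  have c1: "taylor_coeff g 1 = (1 - cnj (g 0) * g 0) * h 0"
    using arg_cong[OF G_eq, of "\<lambda>F. fps_nth F 1"] by (simp add: G_def H_def)
  have c2: "taylor_coeff g 2 = (1 - cnj (g 0) * g 0) * taylor_coeff h 1 - cnj (g 0) * taylor_coeff g 1 * h 0"
    using arg_cong[OF G_eq, of "\<lambda>F. fps_nth F 2"]
    by (simp add: G_def H_def numeral_2_eq_2 fps_mult_nth_1 algebra_simps)
  have nn: "cnj (g 0) * g 0 = (norm (g 0))\<^sup>2"
    using complex_norm_square[of "g 0"] by (simp add: mult.commute)
  show ?thesis
    using that[OF h] c1 c2 unfolding nn by simp
qed

lemma schur_function_taylor_coeff_1_bound:
  assumes g: "schur_function g"
  shows "norm (taylor_coeff g 1) \<le> 1 - (norm (g 0))\<^sup>2"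
proof (cases "norm (g 0) < 1")
  case True
  obtain h :: "complex \<Rightarrow> complex" where h: "schur_function h"
    and c1: "taylor_coeff g 1 = complex_of_real (1 - (norm (g 0))\<^sup>2) * h 0"
    using schur_algorithm_taylor_coeffs[OF g True] by metis
  have "norm (h 0) \<le> 1"
    using h by (simp add: schur_function_def)
  moreover have "0 \<le> 1 - (norm (g 0))\<^sup>2"
    using True by (simp add: power_le_one)
  ultimately show ?thesis
    unfolding c1 norm_mult norm_of_real by (simp add: mult_left_le)
next
  case False
  moreover have "norm (g 0) \<le> 1"
    using g by (simp add: schur_function_def)
  ultimately have "norm (g 0) = 1"
    by simp
  then show ?thesis
    using schur_function_taylor_coeff_eq_0[OF g] by simp
qed

lemma schur_function_taylor_coeff_2_bound:
  assumes g: "schur_function g"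
  shows "norm (taylor_coeff g 2) \<le> 1 - (norm (g 0))\<^sup>2 - (norm (taylor_coeff g 1))\<^sup>2 / (1 + norm (g 0))"
proof (cases "norm (g 0) < 1")
  case True
  define a where "a = norm (g 0)"
  define s where "s = 1 - a\<^sup>2"
  define b where "b = norm (taylor_coeff g 1)"
  obtain h :: "complex \<Rightarrow> complex" where h: "schur_function h"
    and c1: "taylor_coeff g 1 = complex_of_real s * h 0"
    and c2: "taylor_coeff g 2 = complex_of_real s * taylor_coeff h 1 - cnj (g 0) * taylor_coeff g 1 * h 0"
    using schur_algorithm_taylor_coeffs[OF g True] unfolding s_def a_def by metis
  have a: "0 \<le> a" "a < 1"
    using True by (simp_all add: a_def)
  have s_factor: "s = (1 - a) * (1 + a)"
    by (simp add: s_def algebra_simps power2_eq_square)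
  have s: "s > 0"
    using a by (simp add: s_factor)
  have h0: "norm (h 0) = b / s"
    using c1 s by (simp add: b_def norm_mult)
  have "norm (taylor_coeff g 2) \<le> s * norm (taylor_coeff h 1) + a * b * norm (h 0)"
    using norm_triangle_ineq4[of "complex_of_real s * taylor_coeff h 1" "cnj (g 0) * taylor_coeff g 1 * h 0"] s
    unfolding c2 by (simp add: norm_mult a_def b_def)
  also have "\<dots> \<le> s * (1 - (norm (h 0))\<^sup>2) + a * b * norm (h 0)"
    using schur_function_taylor_coeff_1_bound[OF h] s by simp
  also have "\<dots> = s - (1 - a) * b\<^sup>2 / s"
    unfolding h0 using s by (simp add: field_simps power2_eq_square)
  also have "(1 - a) * b\<^sup>2 / s = b\<^sup>2 / (1 + a)"
    unfolding s_factor using a by (subst mult_divide_mult_cancel_left) auto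
  finally show ?thesis
    by (simp add: s_def a_def b_def)
next
  case False
  moreover have "norm (g 0) \<le> 1"
    using g by (simp add: schur_function_def)
  ultimately have "norm (g 0) = 1"
    by simp
  then show ?thesis
    using schur_function_taylor_coeff_eq_0[OF g] by simp
qed

lemma hankel_functional_real_bound:
  fixes a b c :: real
  assumes a: "0 \<le> a" "a \<le> 1" and b: "0 \<le> b" "b \<le> 1 - a\<^sup>2"
    and c: "c \<le> 1 - a\<^sup>2 - b\<^sup>2 / (1 + a)"
  shows "4 * a * c + 2 * a\<^sup>2 * b + 3 * b\<^sup>2 + 3 * a^4 \<le> 3"
proof (cases "a = 1")
  case True
  then have "b = 0"
    using b by simp
  then show ?thesis
    using True c by simp
next
  case False
  define s where "s = 1 - a\<^sup>2"
  have s: "s > 0"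
    using a False by (simp add: s_def power_less_one_iff)
  define G where "G = 3 - 4 * a * s - 3 * a^4"
  have "G = (1 - a) * ((1 - a) + s + 1 + 3 * a^3)"
    by (simp add: G_def s_def algebra_simps power2_eq_square power3_eq_cube power4_eq_xxxx)
  then have G: "G \<ge> 0"
    using a power_le_one[of a 2] by (simp add: s_def)
  define P where "P = (1 + a) * G - 2 * a\<^sup>2 * (1 + a) * b - (3 - a) * b\<^sup>2"
  \<comment> \<open>\<open>P\<close> is a concave quadratic in \<open>b\<close> vanishing at \<open>b = s\<close>.\<close>
  have "s * P = (s - b) * ((1 + a) * G + (3 - a) * b * s)"
    by (simp add: P_def G_def s_def algebra_simps power2_eq_square power3_eq_cube power4_eq_xxxx)
  moreover have "(s - b) * ((1 + a) * G + (3 - a) * b * s) \<ge> 0"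
    using a b G s by (simp add: s_def)
  ultimately have P: "P \<ge> 0"
    using s by (metis zero_le_mult_iff not_less)
  have "(1 + a) * (4 * a * c) \<le> (1 + a) * (4 * a * (s - b\<^sup>2 / (1 + a)))"
    using a c by (intro mult_left_mono) (auto simp: s_def)
  also have "\<dots> = 4 * a * s * (1 + a) - 4 * a * b\<^sup>2"
    using a by (simp add: field_simps)
  finally have "(1 + a) * (4 * a * c + 2 * a\<^sup>2 * b + 3 * b\<^sup>2 + 3 * a^4) \<le> (1 + a) * 3"
    using P by (simp add: P_def G_def algebra_simps)
  then show ?thesis
    using a by (simp only: mult_le_cancel_left_pos add_pos_nonneg zero_less_one)
qed

lemma schur_function_hankel_functional_bound:
  assumes k: "schur_function k"
  shows "norm (4 * k 0 * taylor_coeff k 2 + 2 * (k 0)\<^sup>2 * taylor_coeff k 1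
              - 3 * (taylor_coeff k 1)\<^sup>2 - 3 * (k 0)^4) \<le> 3"
proof -
  define a where "a = norm (k 0)"
  define b where "b = norm (taylor_coeff k 1)"
  have "norm (4 * k 0 * taylor_coeff k 2 + 2 * (k 0)\<^sup>2 * taylor_coeff k 1
              - 3 * (taylor_coeff k 1)\<^sup>2 - 3 * (k 0)^4)
        \<le> norm (4 * k 0 * taylor_coeff k 2) + norm (2 * (k 0)\<^sup>2 * taylor_coeff k 1)
              + norm (3 * (taylor_coeff k 1)\<^sup>2) + norm (3 * (k 0)^4)"
    by (intro norm_triangle_le_diff norm_triangle_le add_mono order.refl)
  also have "\<dots> = 4 * a * norm (taylor_coeff k 2) + 2 * a\<^sup>2 * b + 3 * b\<^sup>2 + 3 * a^4"
    by (simp add: a_def b_def norm_mult norm_power)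
  also have "\<dots> \<le> 3"
    using k schur_function_taylor_coeff_1_bound[OF k] schur_function_taylor_coeff_2_bound[OF k]
    by (intro hankel_functional_real_bound) (auto simp: a_def b_def schur_function_def)
  finally show ?thesis .
qed

lemma norm_diff_1_less_norm_add:
  fixes w :: complex and t :: real
  assumes "t > 0" "Re w > 1 - t"
  shows "norm (w - 1) < norm (w + complex_of_real (2 * t - 1))"
proof -
  have "(norm (w + complex_of_real (2 * t - 1)))\<^sup>2 = (Re w + 2 * t - 1)\<^sup>2 + (Im w)\<^sup>2"
    by (simp add: cmod_power2 add_diff_eq)
  moreover have "(norm (w - 1))\<^sup>2 = (Re w - 1)\<^sup>2 + (Im w)\<^sup>2"
    by (simp add: cmod_power2)
  moreover have "(Re w + 2 * t - 1)\<^sup>2 - (Re w - 1)\<^sup>2 = 4 * t * (Re w - (1 - t))"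
    by (simp add: algebra_simps power2_eq_square)
  moreover have "4 * t * (Re w - (1 - t)) > 0"
    using assms by simp
  ultimately have "(norm (w - 1))\<^sup>2 < (norm (w + complex_of_real (2 * t - 1)))\<^sup>2"
    by linarith
  then show ?thesis
    by (simp add: power2_less_imp_less)
qed

lemma starlike_of_order_subordination:
  fixes f :: "complex \<Rightarrow> complex" and t :: real
  assumes t: "t > 0" and holf: "f holomorphic_on ball 0 1" and f0: "f 0 = 0"
    and f'0: "deriv f 0 \<noteq> 0"
    and nonzero: "\<And>z. z \<in> ball 0 1 \<Longrightarrow> z \<noteq> 0 \<Longrightarrow> f z \<noteq> 0"
    and order: "\<And>z. z \<in> ball 0 1 \<Longrightarrow> z \<noteq> 0 \<Longrightarrow> Re (z * deriv f z / f z) > 1 - t"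
  obtains k :: "complex \<Rightarrow> complex" where "schur_function k"
    "\<And>z. z \<in> ball 0 1 \<Longrightarrow>
       z * deriv f z * (1 - z * k z) = f z * (1 + complex_of_real (2 * t - 1) * z * k z)"
proof -
  define c where "c = complex_of_real (2 * t - 1)"
  obtain g where holg: "g holomorphic_on ball 0 1" and fg: "\<And>z. norm z < 1 \<Longrightarrow> f z = z * g z"
    and g0: "deriv f 0 = g 0"
    using Schwarz3[OF holf f0] by blast
  have g_nonzero: "g z \<noteq> 0" if "z \<in> ball 0 1" for z
    using nonzero[OF that] fg[of z] that g0 f'0 by (cases "z = 0") auto
  define q where "q z = deriv f z / g z" for z
  have holq: "q holomorphic_on ball 0 1"
    unfolding q_def using holf holg g_nonzero by (intro holomorphic_intros holomorphic_deriv) auto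
  have q0: "q 0 = 1"
    using g0 f'0 by (simp add: q_def)
  have zf': "z * deriv f z = f z * q z" if "z \<in> ball 0 1" for z
    using fg[of z] g_nonzero[OF that] that by (simp add: q_def)
  have Re_q: "Re (q z) > 1 - t" if "z \<in> ball 0 1" for z
  proof (cases "z = 0")
    case True
    then show ?thesis
      using q0 t by simp
  next
    case False
    then show ?thesis
      using order[OF that False] zf'[OF that] nonzero[OF that False] by simp
  qed
  have den: "q z + c \<noteq> 0" if "z \<in> ball 0 1" for z
  proof
    assume "q z + c = 0"
    then have "Re (q z) + (2 * t - 1) = 0"
      by (metis c_def Re_complex_of_real plus_complex.sel(1) zero_complex.sel(1))
    then show False
      using Re_q[OF that] t by simp
  qed
  \<comment> \<open>The Cayley-type map sending the half-plane \<open>Re w > 1 - t\<close> onto the unit disc and \<open>1\<close> to \<open>0\<close>.\<close>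
  define \<omega> where "\<omega> z = (q z - 1) / (q z + c)" for z
  have hol\<omega>: "\<omega> holomorphic_on ball 0 1"
    unfolding \<omega>_def using holq den by (intro holomorphic_intros) auto
  have \<omega>0: "\<omega> 0 = 0"
    by (simp add: \<omega>_def q0)
  have \<omega>_less: "norm (\<omega> z) < 1" if "norm z < 1" for z
    using norm_diff_1_less_norm_add[OF t Re_q] den that
    by (simp add: \<omega>_def c_def norm_divide divide_less_eq)
  obtain k where k: "schur_function k" and \<omega>k: "\<And>z. z \<in> ball 0 1 \<Longrightarrow> \<omega> z = z * k z"
    using Schwarz_quotient_schur_function[OF hol\<omega> \<omega>0 \<omega>_less] by blast
  show ?thesis
  proof (rule that[OF k])
    fix z :: complex
    assume z: "z \<in> ball 0 1"
    have "q z * (1 - \<omega> z) = 1 + c * \<omega> z"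
      using den[OF z] by (simp add: \<omega>_def field_simps)
    then show "z * deriv f z * (1 - z * k z) = f z * (1 + complex_of_real (2 * t - 1) * z * k z)"
      using zf'[OF z] \<omega>k[OF z] by (simp add: c_def mult.assoc)
  qed
qed

lemma subordination_taylor_coeffs:
  fixes f k :: "complex \<Rightarrow> complex" and c :: complex
  assumes holf: "f holomorphic_on ball 0 1" and holk: "k holomorphic_on ball 0 1"
    and f0: "f 0 = 0" and f'0: "deriv f 0 = 1"
    and eq: "\<And>z. z \<in> ball 0 1 \<Longrightarrow> z * deriv f z * (1 - z * k z) = f z * (1 + c * z * k z)"
  shows "taylor_coeff f 2 = (1 + c) * k 0"
    and "2 * taylor_coeff f 3 = (1 + c) * taylor_coeff k 1 + (2 + c) * taylor_coeff f 2 * k 0"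
    and "3 * taylor_coeff f 4 = (1 + c) * taylor_coeff k 2 + (2 + c) * taylor_coeff f 2 * taylor_coeff k 1
                                 + (3 + c) * taylor_coeff f 3 * k 0"
proof -
  define F where "F = fps_expansion f 0"
  define K where "K = fps_expansion k 0"
  define P where "P = fps_X * fps_deriv F + fps_const c * F"
  have F: "f has_fps_expansion F" and K: "k has_fps_expansion K"
    using holf holk holomorphic_on_ball_has_fps_expansion[of _ 1] by (simp_all add: F_def K_def)
  have "(\<lambda>z. z * deriv f z - f z) has_fps_expansion fps_X * fps_deriv F - F"
    by (intro has_fps_expansion_diff has_fps_expansion_mult has_fps_expansion_fps_X
        has_fps_expansion_deriv F)
  moreover have "(\<lambda>z. z * (k z * (z * deriv f z + c * f z))) has_fps_expansion fps_X * (K * P)"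
    unfolding P_def
    by (intro has_fps_expansion_mult has_fps_expansion_add has_fps_expansion_fps_X
        has_fps_expansion_deriv has_fps_expansion_cmult_left F K)
  moreover have "z * deriv f z - f z = z * (k z * (z * deriv f z + c * f z))" if "z \<in> ball 0 1" for z
  proof -
    have "z * deriv f z - f z - z * (k z * (z * deriv f z + c * f z))
            = z * deriv f z * (1 - z * k z) - f z * (1 + c * z * k z)"
      by (simp add: algebra_simps)
    then show ?thesis
      using eq[OF that] by simp
  qed
  ultimately have FP: "fps_X * fps_deriv F - F = fps_X * (K * P)"
    by (rule has_fps_expansion_unique_on_ball[OF _ _ zero_less_one])
  have P_nth: "fps_nth P n = (of_nat n + c) * taylor_coeff f n" for n
    by (cases n) (simp_all add: P_def F_def algebra_simps)
  have a1: "taylor_coeff f (Suc 0) = 1"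
    using f'0 by (simp add: taylor_coeff_def)
  have "of_nat (n - 1) * taylor_coeff f n = fps_nth (K * P) (n - 1)" if "n > 0" for n
    using arg_cong[OF FP, of "\<lambda>G. fps_nth G n"] that
    by (cases n) (simp_all add: F_def algebra_simps)
  from this[of 2] this[of 3] this[of 4] show
    "taylor_coeff f 2 = (1 + c) * k 0"
    "2 * taylor_coeff f 3 = (1 + c) * taylor_coeff k 1 + (2 + c) * taylor_coeff f 2 * k 0"
    "3 * taylor_coeff f 4 = (1 + c) * taylor_coeff k 2 + (2 + c) * taylor_coeff f 2 * taylor_coeff k 1
                             + (3 + c) * taylor_coeff f 3 * k 0"
    by (simp_all add: fps_mult_nth_1 fps_mult_nth_2 fps_mult_nth_3 P_nth K_def f0 a1 algebra_simps)
qed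

lemma hankel_determinant_identity:
  fixes a2 a3 a4 k0 k1 k2 T :: complex
  assumes a2: "a2 = 2 * T * k0"
    and a3: "2 * a3 = 2 * T * k1 + (2 * T + 1) * a2 * k0"
    and a4: "3 * a4 = 2 * T * k2 + (2 * T + 1) * a2 * k1 + (2 * T + 2) * a3 * k0"
  shows "a2 * a4 - a3\<^sup>2
           = T\<^sup>2 / 3 * ((4 * k0 * k2 + 2 * k0\<^sup>2 * k1 - 3 * k1\<^sup>2 - 3 * k0^4) - 4 * (T\<^sup>2 - 1) * k0^4)"
proof -
  have "12 * (a2 * a4 - a3\<^sup>2) = 4 * a2 * (3 * a4) - 3 * (2 * a3)\<^sup>2"
    by (simp add: algebra_simps power2_eq_square)
  also have "\<dots> = 4 * a2 * (2 * T * k2 + (2 * T + 1) * a2 * k1) + 2 * (2 * T + 2) * a2 * k0 * (2 * a3)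
                    - 3 * (2 * a3)\<^sup>2"
    unfolding a4 by (simp add: algebra_simps)
  also have "\<dots> = 12 * (T\<^sup>2 / 3 * ((4 * k0 * k2 + 2 * k0\<^sup>2 * k1 - 3 * k1\<^sup>2 - 3 * k0^4)
                                      - 4 * (T\<^sup>2 - 1) * k0^4))"
    unfolding a3 a2 by algebra
  finally show ?thesis
    by (simp only: mult_cancel_left) simp
qed

lemma norm_hankel_form_le:
  fixes A k0 :: complex and t :: real
  assumes A: "norm A \<le> 3" and k0: "norm k0 \<le> 1" and t: "1 \<le> t"
  shows "norm ((complex_of_real t)\<^sup>2 / 3 * (A - 4 * ((complex_of_real t)\<^sup>2 - 1) * k0^4))
           \<le> t\<^sup>2 / 3 * (4 * (t\<^sup>2 - 1) + 3)"
proof -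
  have t2: "t\<^sup>2 - 1 \<ge> 0"
    using t by (simp add: one_le_power)
  have "4 * ((complex_of_real t)\<^sup>2 - 1) * k0^4 = complex_of_real (4 * (t\<^sup>2 - 1)) * k0^4"
    by simp
  then have "norm (4 * ((complex_of_real t)\<^sup>2 - 1) * k0^4) = 4 * (t\<^sup>2 - 1) * norm k0 ^ 4"
    using t2 by (simp only: norm_mult norm_of_real norm_power abs_of_nonneg mult_nonneg_nonneg zero_le_numeral)
  also have "\<dots> \<le> 4 * (t\<^sup>2 - 1)"
    using k0 t2 by (intro mult_left_le power_le_one) auto
  finally have "norm (A - 4 * ((complex_of_real t)\<^sup>2 - 1) * k0^4) \<le> 4 * (t\<^sup>2 - 1) + 3"
    using norm_triangle_ineq4[of A "4 * ((complex_of_real t)\<^sup>2 - 1) * k0^4"] A by linarith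
  moreover have "(complex_of_real t)\<^sup>2 / 3 = complex_of_real (t\<^sup>2 / 3)"
    by simp
  ultimately show ?thesis
    by (simp only: norm_mult norm_of_real abs_of_nonneg) (simp add: mult_left_mono)
qed

theorem theorem2p1:
  fixes f :: "complex \<Rightarrow> complex" and \<alpha> :: real
  assumes "1 \<le> \<alpha>" and "\<alpha> \<le> 2"
    and "f holomorphic_on ball 0 1"
    and "f 0 = 0" and "deriv f 0 = 1"
    and "\<And>z. z \<in> ball 0 1 \<Longrightarrow> z \<noteq> 0 \<Longrightarrow> f z \<noteq> 0"
    and "\<And>z. z \<in> ball 0 1 \<Longrightarrow> z \<noteq> 0 \<Longrightarrow> Re (z * deriv f z / f z) > \<alpha> / 2 - 1"
  shows "cmod (taylor_coeff f 2 * taylor_coeff f 4 - (taylor_coeff f 3)\<^sup>2)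
           \<le> (2 - \<alpha>/2)\<^sup>2 / 3 * (4 * ((2 - \<alpha>/2)\<^sup>2 - 1) + 3)"
proof -
  define t where "t = 2 - \<alpha> / 2"
  have t: "1 \<le> t"
    using assms(2) by (simp add: t_def)
  have order: "Re (z * deriv f z / f z) > 1 - t" if "z \<in> ball 0 1" "z \<noteq> 0" for z
    using assms(7)[OF that] by (simp add: t_def)
  have t_pos: "t > 0" and f'0: "deriv f 0 \<noteq> 0"
    using t assms(5) by simp_all
  obtain k :: "complex \<Rightarrow> complex" where k: "schur_function k" and
    eq: "\<And>z. z \<in> ball 0 1 \<Longrightarrow>
           z * deriv f z * (1 - z * k z) = f z * (1 + complex_of_real (2 * t - 1) * z * k z)"
    using starlike_of_order_subordination[OF t_pos assms(3,4) f'0 assms(6) order] by blast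
  have "1 + complex_of_real (2 * t - 1) = 2 * complex_of_real t"
    and "2 + complex_of_real (2 * t - 1) = 2 * complex_of_real t + 1"
    and "3 + complex_of_real (2 * t - 1) = 2 * complex_of_real t + 2"
    by simp_all
  note coeffs = subordination_taylor_coeffs[OF assms(3) _ assms(4,5) eq, unfolded this]
  have hankel: "taylor_coeff f 2 * taylor_coeff f 4 - (taylor_coeff f 3)\<^sup>2
          = (complex_of_real t)\<^sup>2 / 3 * ((4 * k 0 * taylor_coeff k 2 + 2 * (k 0)\<^sup>2 * taylor_coeff k 1
              - 3 * (taylor_coeff k 1)\<^sup>2 - 3 * (k 0)^4) - 4 * ((complex_of_real t)\<^sup>2 - 1) * (k 0)^4)"
    using k by (intro hankel_determinant_identity coeffs) (simp_all add: schur_function_def)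
  have "norm (k 0) \<le> 1"
    using k by (simp add: schur_function_def)
  then show ?thesis
    unfolding hankel t_def[symmetric]
    by (rule norm_hankel_form_le[OF schur_function_hankel_functional_bound[OF k] _ t])
qed

end
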